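(* Let $p\ge1$ be an integer, $q>1$ and $\alpha\in\mathbb R$. There exists a continuous function $\rho_0:\mathrm{HT}(p,q)\to(0,\infty)$ with the following properties: $\rho_0\in\mathcal C^\infty(\mathrm{HT})$; for every vertex $v$ and every $x\in\mathbb R$, the function $y\mapsto\partial_y\rho_0(x+iy,v)$ has compact support in $(q^{\mathfrak h(v)-1},q^{\mathfrak h(v)})$; $\rho_0$ tends to infinity at infinity; and the functions $|\nabla\rho_0|=y\bigl(|\partial_x\rho_0|^2+|\partial_y\rho_0|^2\bigr)^{1/2}$ and $|\mathcal A_\alpha\rho_0|$, where $\mathcal A_\alpha=y^2(\partial_x^2+\partial_y^2)+\alpha y\partial_y$ on each open strip, are bounded on $\mathrm{HT}^o$. (That is, $\rho_0$ is a strip-adapted exhaustion function for $\mathrm{HT}(p,q)$ equipped with $\phi_e(s)=s^{-2}$, $\psi_e(s)=s^\alpha$.)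
   Context: Treebolic space. Let $T^0$ be the vertex set of the homogeneous tree in which every vertex has $p+1$ neighbours; fix an end $\omega$ and let $\mathfrak h:T^0\to\mathbb Z$ be the Busemann function with respect to $\omega$; each vertex $v$ has one neighbour $v^-$ with $\mathfrak h(v^-)=\mathfrak h(v)-1$ and $p$ neighbours $w$ with $w^-=v$. For $v$ with $k=\mathfrak h(v)$, $S_v=\{(x+iy,v):x\in\mathbb R,q^{k-1}\le y\le q^k\}$, $S_v^o$ the same with strict inequalities, $L_v=\{(x+iq^k,v)\}$. $\mathrm{HT}(p,q)$ is obtained from the disjoint union of the $S_v$ by identifying, for every $w$ with $w^-=v$, the bottom line of $S_w$ with $L_v$ pointwise; $\mathrm{HT}^o=\bigcup_vS_v^o$. Each strip carries the hyperbolic metric $y^{-2}(dx^2+dy^2)$ and $\mathrm{HT}$ the induced path metric ("tends to infinity at infinity" refers to leaving every compact set). $\mathcal C^\infty(\mathrm{HT})$: continuous $f$ such that for each $v$, $f(\cdot,v)$ has continuous partial derivatives of all orders in $S_v^o$ that are bounded on $\{(z,v)\in S_v^o:|\mathrm{Re}\,z|\le R\}$ for every $R>0$. *)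

theory Defs
  imports "HOL-Analysis.Analysis"
begin

text \<open>The homogeneous tree of degree p+1 with a fixed end omega, described by the
  predecessor map v \<mapsto> v^- (the neighbour closer to omega) and the Busemann function h.\<close>
definition homtree :: "nat \<Rightarrow> ('v \<Rightarrow> 'v) \<Rightarrow> ('v \<Rightarrow> int) \<Rightarrow> bool" where
  "homtree p pred h \<longleftrightarrow>
     (\<forall>v. h (pred v) = h v - 1) \<and>
     (\<forall>v. finite {w. pred w = v} \<and> card {w. pred w = v} = p) \<and>
     (\<forall>v w. \<exists>m n. (pred ^^ m) v = (pred ^^ n) w)"

definition strip :: "real \<Rightarrow> ('v \<Rightarrow> int) \<Rightarrow> 'v \<Rightarrow> (real \<times> real) set" where
  "strip q h v = {(x, y). q powr (real_of_int (h v) - 1) \<le> y \<and> y \<le> q powr (real_of_int (h v))}"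

definition strip_open :: "real \<Rightarrow> ('v \<Rightarrow> int) \<Rightarrow> 'v \<Rightarrow> (real \<times> real) set" where
  "strip_open q h v = {(x, y). q powr (real_of_int (h v) - 1) < y \<and> y < q powr (real_of_int (h v))}"

text \<open>HT(p,q) as a set of canonical representatives: a point of the bottom line of S_w is
  identified with the point of L_{w^-}; we represent it by its copy in S_{w^-}.\<close>
definition HT_set :: "real \<Rightarrow> ('v \<Rightarrow> int) \<Rightarrow> ((real \<times> real) \<times> 'v) set" where
  "HT_set q h = {((x, y), v). q powr (real_of_int (h v) - 1) < y \<and> y \<le> q powr (real_of_int (h v))}"

definition HT_proj :: "real \<Rightarrow> ('v \<Rightarrow> int) \<Rightarrow> ('v \<Rightarrow> 'v) \<Rightarrow> (real \<times> real) \<times> 'v \<Rightarrow> (real \<times> real) \<times> 'v" where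
  "HT_proj q h pred P = (case P of ((x, y), v) \<Rightarrow>
     if y = q powr (real_of_int (h v) - 1) then ((x, y), pred v) else ((x, y), v))"

definition HT_top :: "real \<Rightarrow> ('v \<Rightarrow> int) \<Rightarrow> ('v \<Rightarrow> 'v) \<Rightarrow> ((real \<times> real) \<times> 'v) topology" where
  "HT_top q h pred = topology (\<lambda>U. U \<subseteq> HT_set q h \<and>
     (\<forall>v. openin (top_of_set (strip q h v)) {z \<in> strip q h v. HT_proj q h pred (z, v) \<in> U}))"

definition pdx :: "(real \<times> real \<Rightarrow> real) \<Rightarrow> real \<times> real \<Rightarrow> real" where
  "pdx g P = deriv (\<lambda>t. g (t, snd P)) (fst P)"

definition pdy :: "(real \<times> real \<Rightarrow> real) \<Rightarrow> real \<times> real \<Rightarrow> real" where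
  "pdy g P = deriv (\<lambda>t. g (fst P, t)) (snd P)"

text \<open>Iterated partial derivative; True = d/dx, False = d/dy (applied right to left).\<close>
fun iter_pd :: "bool list \<Rightarrow> (real \<times> real \<Rightarrow> real) \<Rightarrow> real \<times> real \<Rightarrow> real" where
  "iter_pd [] g = g"
| "iter_pd (b # ds) g = (if b then pdx (iter_pd ds g) else pdy (iter_pd ds g))"

definition strip_smooth :: "(real \<times> real) set \<Rightarrow> (real \<times> real \<Rightarrow> real) \<Rightarrow> bool" where
  "strip_smooth U g \<longleftrightarrow> (\<forall>ds.
     continuous_on U (iter_pd ds g) \<and>
     (\<forall>x y. (x, y) \<in> U \<longrightarrow>
        (\<lambda>t. iter_pd ds g (t, y)) differentiable (at x) \<and>
        (\<lambda>t. iter_pd ds g (x, t)) differentiable (at y)) \<and>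
     (\<forall>R. bounded (iter_pd ds g ` (U \<inter> {(x, y). \<bar>x\<bar> \<le> R}))))"

end

theory Submission
  imports Defs "HOL-Computational_Algebra.Polynomial"
begin

text \<open>On the strip of a vertex \<open>v\<close> with bottom height \<open>s\<close> take
  \<open>\<rho>(x + iy, v) = A(x) + (B(x) - A(x)) \<chi>(y / s)\<close>, where \<open>A(x) = c(v\<^sup>-) + ln (1 + (x / s)\<^sup>2)\<close>,
  \<open>B(x) = c(v) + ln (1 + (x / (q s))\<^sup>2)\<close>, \<open>c\<close> is one plus the tree distance to a fixed vertex, and
  \<open>\<chi>\<close> is a smooth step vanishing near 1 and equal to 1 near \<open>q\<close>. On the bottom line of the strip
  \<open>\<rho> = A\<close>, which is the value on the top line of the parent strip, so the pieces glue to a continuous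
  function on HT, and \<open>\<partial>\<^sub>y\<rho>\<close> lives where \<open>\<chi>' \<noteq> 0\<close>. As \<open>c\<close> is 1-Lipschitz,
  \<open>|B - A| \<le> 1 + 2 ln q\<close>, while the first and second derivatives of \<open>A\<close> and \<open>B\<close> are \<open>O(1/s)\<close> and
  \<open>O(1/s\<^sup>2)\<close>; since \<open>y \<le> q s\<close> on the strip, \<open>y |\<nabla>\<rho>|\<close> and \<open>y\<^sup>2 \<Delta>\<rho> + \<alpha> y \<partial>\<^sub>y\<rho>\<close> are bounded.
  A sublevel set of \<open>\<rho>\<close> lies over finitely many vertices and a bounded range of \<open>x\<close>, hence is compact.
  Smoothness follows from closure arguments: sums of products \<open>a(x) b(y)\<close> of smooth functions are
  stable under partial differentiation.\<close>

section \<open>Smooth real functions\<close>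

definition smooth :: "(real \<Rightarrow> real) \<Rightarrow> bool" where
  "smooth f \<longleftrightarrow> (\<forall>n x. (deriv ^^ n) f differentiable (at x))"

lemma smooth_if_deriv_closed:
  assumes closed: "\<And>g. g \<in> S \<Longrightarrow> (\<forall>x. g differentiable (at x)) \<and> deriv g \<in> S" and "f \<in> S"
  shows "smooth f"
proof -
  have "(deriv ^^ n) g \<in> S" if "g \<in> S" for n g
    using that by (induction n) (auto dest: closed)
  then show ?thesis using \<open>f \<in> S\<close> closed unfolding smooth_def by blast
qed

lemma smooth_differentiable: "smooth f \<Longrightarrow> f differentiable (at x)"
  unfolding smooth_def by (metis funpow_0)

lemma smooth_deriv: "smooth f \<Longrightarrow> smooth (deriv f)"
  unfolding smooth_def by (metis funpow_Suc_right comp_apply)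

lemma smoothI: "(\<And>x. f differentiable (at x)) \<Longrightarrow> smooth (deriv f) \<Longrightarrow> smooth f"
  unfolding smooth_def by (metis funpow_Suc_right comp_apply not0_implies_Suc funpow_0)

lemma smooth_has_real_derivative: "smooth f \<Longrightarrow> (f has_real_derivative deriv f x) (at x)"
  using smooth_differentiable DERIV_deriv_iff_real_differentiable by blast

lemma smooth_isCont: "smooth f \<Longrightarrow> isCont f x"
  using smooth_differentiable differentiable_imp_continuous_within by blast

lemma smooth_continuous_on: "smooth f \<Longrightarrow> continuous_on S f"
  by (simp add: continuous_at_imp_continuous_on smooth_isCont)

lemma smooth_const: "smooth (\<lambda>x. c)"
  by (rule smooth_if_deriv_closed[where S="{\<lambda>x. c, \<lambda>x. 0}"]) auto

lemma smooth_poly: "smooth (poly P)"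
  by (rule smooth_if_deriv_closed[where S="range poly"])
     (auto simp: real_differentiable_def intro!: DERIV_imp_deriv poly_DERIV
        image_eqI[where x="pderiv _"] ext)

lemma smooth_affine:
  assumes "smooth g" shows "smooth (\<lambda>x. k * g (c * x + d))"
proof (rule smooth_if_deriv_closed[where S="{f. \<exists>k g. smooth g \<and> f = (\<lambda>x. k * g (c * x + d))}"])
  fix f assume "f \<in> {f. \<exists>k g. smooth g \<and> f = (\<lambda>x. k * g (c * x + d))}"
  then obtain k g where g: "smooth g" and f: "f = (\<lambda>x. k * g (c * x + d))" by blast
  have D: "(f has_real_derivative (k * c) * deriv g (c * x + d)) (at x)" for x
    unfolding f using smooth_has_real_derivative[OF g, of "c * x + d"]
    by (auto intro!: derivative_eq_intros DERIV_chain2[where f=g] simp: algebra_simps)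
  then have "deriv f = (\<lambda>x. (k * c) * deriv g (c * x + d))"
    by (auto intro!: DERIV_imp_deriv)
  then show "(\<forall>x. f differentiable (at x)) \<and>
      deriv f \<in> {f. \<exists>k g. smooth g \<and> f = (\<lambda>x. k * g (c * x + d))}"
    using D smooth_deriv[OF g] by (auto simp: real_differentiable_def)
qed (use assms in auto)

lemma smooth_scaled: "smooth g \<Longrightarrow> smooth (\<lambda>x. g (x / c))"
  using smooth_affine[of g 1 "1 / c" 0] by simp

lemma has_real_derivative_scaled:
  "smooth g \<Longrightarrow> ((\<lambda>x. g (x / c)) has_real_derivative deriv g (x / c) / c) (at x)"
  using smooth_has_real_derivative[of g "x / c"]
  by (auto intro!: derivative_eq_intros DERIV_chain2[where f=g] simp: divide_inverse)

lemma smooth_field_differentiable: "smooth f \<Longrightarrow> f field_differentiable (at x)"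
  using smooth_has_real_derivative field_differentiable_def by blast

lemma deriv_scaled: "smooth g \<Longrightarrow> deriv (\<lambda>x. g (x / c)) x = deriv g (x / c) / c"
  by (rule DERIV_imp_deriv[OF has_real_derivative_scaled])

lemma deriv_add_everywhere:
  fixes f g :: "real \<Rightarrow> real"
  assumes "\<forall>x. f differentiable (at x)" "\<forall>x. g differentiable (at x)"
  shows "(\<forall>x. (\<lambda>x. f x + g x) differentiable (at x)) \<and>
    deriv (\<lambda>x. f x + g x) = (\<lambda>x. deriv f x + deriv g x)"
proof -
  have "((\<lambda>x. f x + g x) has_real_derivative deriv f x + deriv g x) (at x)" for x
    using assms DERIV_deriv_iff_real_differentiable by (auto intro!: derivative_eq_intros)
  then show ?thesis by (auto simp: real_differentiable_def intro!: ext DERIV_imp_deriv)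
qed

inductive_set smooth_product_sums :: "(real \<Rightarrow> real) set" where
  "smooth a \<Longrightarrow> smooth b \<Longrightarrow> (\<lambda>x. a x * b x) \<in> smooth_product_sums"
| "f \<in> smooth_product_sums \<Longrightarrow> g \<in> smooth_product_sums \<Longrightarrow> (\<lambda>x. f x + g x) \<in> smooth_product_sums"

lemma smooth_product_sums_deriv_closed:
  "f \<in> smooth_product_sums \<Longrightarrow> (\<forall>x. f differentiable (at x)) \<and> deriv f \<in> smooth_product_sums"
proof (induction rule: smooth_product_sums.induct)
  case (1 a b)
  have D: "((\<lambda>x. a x * b x) has_real_derivative (deriv a x * b x + a x * deriv b x)) (at x)" for x
    using smooth_has_real_derivative[OF 1(1)] smooth_has_real_derivative[OF 1(2)]
    by (auto intro!: derivative_eq_intros)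
  then have "deriv (\<lambda>x. a x * b x) = (\<lambda>x. deriv a x * b x + a x * deriv b x)"
    by (auto intro!: DERIV_imp_deriv)
  moreover have "(\<lambda>x. deriv a x * b x + a x * deriv b x) \<in> smooth_product_sums"
    by (intro smooth_product_sums.intros smooth_deriv 1)
  ultimately show ?case using D by (auto simp: real_differentiable_def)
next
  case (2 f g)
  then show ?case using deriv_add_everywhere[of f g] by (auto intro: smooth_product_sums.intros)
qed

lemma smooth_mult: "smooth a \<Longrightarrow> smooth b \<Longrightarrow> smooth (\<lambda>x. a x * b x)"
  by (rule smooth_if_deriv_closed[OF smooth_product_sums_deriv_closed])
     (auto intro: smooth_product_sums.intros)

lemma smooth_add: "smooth a \<Longrightarrow> smooth b \<Longrightarrow> smooth (\<lambda>x. a x + b x)"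
  using smooth_product_sums.intros(2)[OF smooth_product_sums.intros(1) smooth_product_sums.intros(1),
      of a "\<lambda>_. 1" b "\<lambda>_. 1"]
  by (intro smooth_if_deriv_closed[OF smooth_product_sums_deriv_closed]) (auto simp: smooth_const)

lemma smooth_diff: "smooth a \<Longrightarrow> smooth b \<Longrightarrow> smooth (\<lambda>x. a x - b x)"
  using smooth_add[of a "\<lambda>x. (-1) * b (1 * x + 0)"] smooth_affine[of b "-1" 1 0] by simp

text \<open>Derivatives of \<open>a / u\<close> are sums of terms \<open>a' / u ^ k\<close> with smooth \<open>a'\<close>.\<close>

inductive_set smooth_over_powers :: "(real \<Rightarrow> real) \<Rightarrow> (real \<Rightarrow> real) set" for u where
  "smooth a \<Longrightarrow> (\<lambda>x. a x * inverse (u x) ^ k) \<in> smooth_over_powers u"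
| "f \<in> smooth_over_powers u \<Longrightarrow> g \<in> smooth_over_powers u \<Longrightarrow> (\<lambda>x. f x + g x) \<in> smooth_over_powers u"

lemma smooth_over_powers_deriv_closed:
  assumes u: "smooth u" and pos: "\<And>x. u x > 0"
  shows "f \<in> smooth_over_powers u \<Longrightarrow> (\<forall>x. f differentiable (at x)) \<and> deriv f \<in> smooth_over_powers u"
proof (induction rule: smooth_over_powers.induct)
  case (1 a k)
  have D: "((\<lambda>x. a x * inverse (u x) ^ k) has_real_derivative
      deriv a x * inverse (u x) ^ k + (- real k * a x * deriv u x) * inverse (u x) ^ (k + 1)) (at x)"
    for x
  proof -
    have ux: "u x \<noteq> 0" using pos[of x] by simp
    have "((\<lambda>x. a x * inverse (u x) ^ k) has_real_derivative
        deriv a x * inverse (u x) ^ k + a x * (real k * inverse (u x) ^ (k - 1) *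
          (- (inverse (u x) * deriv u x * inverse (u x))))) (at x)"
      using smooth_has_real_derivative[OF 1] smooth_has_real_derivative[OF u] ux
      by (auto intro!: derivative_eq_intros)
    moreover have eq: "a x * (real k * inverse (u x) ^ (k - 1) * (- (inverse (u x) * deriv u x * inverse (u x))))
       = (- real k * a x * deriv u x) * inverse (u x) ^ (k + 1)"
      by (cases k) (simp_all add: field_simps power2_eq_square, simp add: divide_simps algebra_simps)
    ultimately show ?thesis by (simp only: eq)
  qed
  then have "deriv (\<lambda>x. a x * inverse (u x) ^ k) =
      (\<lambda>x. deriv a x * inverse (u x) ^ k + (- real k * a x * deriv u x) * inverse (u x) ^ (k + 1))"
    by (auto intro!: DERIV_imp_deriv)
  moreover have "(\<lambda>x. deriv a x * inverse (u x) ^ k + (- real k * a x * deriv u x) * inverse (u x) ^ (k + 1))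
      \<in> smooth_over_powers u"
    by (intro smooth_over_powers.intros smooth_deriv smooth_mult smooth_const u 1)
  ultimately show ?case using D by (auto simp: real_differentiable_def)
next
  case (2 f g)
  then show ?case using deriv_add_everywhere[of f g] by (auto intro: smooth_over_powers.intros)
qed

lemma smooth_divide: "smooth a \<Longrightarrow> smooth u \<Longrightarrow> (\<And>x. u x > 0) \<Longrightarrow> smooth (\<lambda>x. a x / u x)"
  using smooth_over_powers.intros(1)[of a u 1]
    smooth_if_deriv_closed[OF smooth_over_powers_deriv_closed, of u "\<lambda>x. a x * inverse (u x) ^ 1"]
  by (simp add: divide_inverse)

section \<open>Flat functions and smooth steps\<close>

lemma tendsto_poly_inverse_exp_at_right_0:
  "((\<lambda>t. poly Q (inverse t) * exp (- inverse t)) \<longlongrightarrow> (0::real)) (at_right 0)"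
proof -
  have "((\<lambda>u. \<Sum>i\<le>degree Q. coeff Q i * (u ^ i / exp u)) \<longlongrightarrow> (0::real)) at_top"
    by (intro tendsto_null_sum tendsto_mult_right_zero tendsto_power_div_exp_0)
  moreover have "(\<Sum>i\<le>degree Q. coeff Q i * (u ^ i / exp u)) = poly Q u * exp (- u)" for u :: real
    unfolding poly_altdef exp_minus by (simp add: sum_distrib_right divide_inverse mult.assoc)
  ultimately have "((\<lambda>u. poly Q u * exp (- u)) \<longlongrightarrow> (0::real)) at_top" by simp
  from filterlim_compose[OF this filterlim_inverse_at_top_right] show ?thesis by (simp add: o_def)
qed

definition flat_exp :: "real poly \<Rightarrow> real \<Rightarrow> real" where
  "flat_exp P t = (if t \<le> 0 then 0 else poly P (inverse t) * exp (- inverse t))"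

lemma has_real_derivative_flat_exp_at_0: "(flat_exp P has_real_derivative 0) (at 0)"
proof -
  have left: "((\<lambda>y. (flat_exp P y - flat_exp P 0) / (y - 0)) \<longlongrightarrow> 0) (at_left 0)"
    by (rule tendsto_eventually)
       (auto simp: eventually_at_left_field flat_exp_def intro!: exI[of _ "-1"])
  have "\<forall>\<^sub>F y in at_right 0.
      poly ([:0, 1:] * P) (inverse y) * exp (- inverse y) = (flat_exp P y - flat_exp P 0) / (y - 0)"
    by (auto simp: eventually_at_right_field flat_exp_def divide_inverse intro!: exI[of _ 1])
  then have right: "((\<lambda>y. (flat_exp P y - flat_exp P 0) / (y - 0)) \<longlongrightarrow> 0) (at_right 0)"
    by (rule Lim_transform_eventually[OF tendsto_poly_inverse_exp_at_right_0])
  show ?thesis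
    using filterlim_split_at[OF left right] by (simp add: has_field_derivative_iff)
qed

lemma has_real_derivative_flat_exp:
  "(flat_exp P has_real_derivative flat_exp ([:0, 0, 1:] * (P - pderiv P)) t) (at t)"
proof -
  consider "t < 0" | "t = 0" | "t > 0" by linarith
  then show ?thesis
  proof cases
    case 1
    have "((\<lambda>x. 0) has_real_derivative 0) (at t)" by simp
    then have "(flat_exp P has_real_derivative 0) (at t)"
      by (rule has_field_derivative_transform_within_open[where S="{..<0}"])
         (use 1 in \<open>auto simp: flat_exp_def\<close>)
    then show ?thesis using 1 by (simp add: flat_exp_def)
  next
    case 2
    then show ?thesis
      using has_real_derivative_flat_exp_at_0[of P] by (simp add: flat_exp_def)
  next
    case 3
    have "((\<lambda>x. poly P (inverse x) * exp (- inverse x)) has_real_derivative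
        poly (pderiv P) (inverse t) * (- (inverse t * inverse t)) * exp (- inverse t) +
        poly P (inverse t) * (exp (- inverse t) * (inverse t * inverse t))) (at t)"
      using 3 by (auto intro!: derivative_eq_intros simp: poly_DERIV)
    moreover have "poly (pderiv P) (inverse t) * (- (inverse t * inverse t)) * exp (- inverse t) +
        poly P (inverse t) * (exp (- inverse t) * (inverse t * inverse t)) =
        flat_exp ([:0, 0, 1:] * (P - pderiv P)) t"
      using 3 by (simp add: flat_exp_def algebra_simps power2_eq_square)
    ultimately have "((\<lambda>x. poly P (inverse x) * exp (- inverse x)) has_real_derivative
        flat_exp ([:0, 0, 1:] * (P - pderiv P)) t) (at t)"
      by simp
    then show ?thesis
      by (rule has_field_derivative_transform_within_open[where S="{0<..}"])
         (use 3 in \<open>auto simp: flat_exp_def\<close>)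
  qed
qed

lemma smooth_flat_exp: "smooth (flat_exp P)"
proof (rule smooth_if_deriv_closed[where S="range flat_exp"])
  fix g assume "g \<in> range flat_exp"
  then obtain Q where g: "g = flat_exp Q" by auto
  have "deriv g = flat_exp ([:0, 0, 1:] * (Q - pderiv Q))"
    unfolding g using has_real_derivative_flat_exp by (auto intro!: ext DERIV_imp_deriv)
  then show "(\<forall>x. g differentiable (at x)) \<and> deriv g \<in> range flat_exp"
    using has_real_derivative_flat_exp g by (auto simp: real_differentiable_def)
qed auto

lemma flat_exp_eq_0: "t \<le> 0 \<Longrightarrow> flat_exp P t = 0"
  by (simp add: flat_exp_def)

lemma flat_exp_1_pos: "t > 0 \<Longrightarrow> flat_exp 1 t > 0"
  by (simp add: flat_exp_def)

lemma flat_exp_1_nonneg: "flat_exp 1 t \<ge> 0"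
  by (simp add: flat_exp_def)

definition smooth_step :: "real \<Rightarrow> real" where
  "smooth_step t = flat_exp 1 t / (flat_exp 1 t + flat_exp 1 (1 - t))"

lemma smooth_step_denominator_pos: "flat_exp 1 t + flat_exp 1 (1 - t) > 0"
proof (cases "t > 0")
  case True
  then show ?thesis using flat_exp_1_pos[of t] flat_exp_1_nonneg[of "1 - t"] by linarith
next
  case False
  then show ?thesis using flat_exp_1_pos[of "1 - t"] flat_exp_1_nonneg[of t] by linarith
qed

lemma smooth_smooth_step: "smooth smooth_step"
proof -
  have "smooth (\<lambda>t. flat_exp 1 t / (flat_exp 1 t + 1 * flat_exp 1 ((-1) * t + 1)))"
    using smooth_step_denominator_pos
    by (intro smooth_divide smooth_add smooth_affine smooth_flat_exp) simp_all
  then show ?thesis unfolding smooth_step_def[abs_def] by simp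
qed

lemma smooth_step_range: "0 \<le> smooth_step t \<and> smooth_step t \<le> 1"
  using smooth_step_denominator_pos[of t] flat_exp_1_nonneg[of t] flat_exp_1_nonneg[of "1 - t"]
  by (auto simp: smooth_step_def divide_le_eq_1)

lemma smooth_step_eq_0: "t \<le> 0 \<Longrightarrow> smooth_step t = 0"
  by (simp add: smooth_step_def flat_exp_eq_0)

lemma smooth_step_eq_1: "t \<ge> 1 \<Longrightarrow> smooth_step t = 1"
  using smooth_step_denominator_pos[of t] by (simp add: smooth_step_def flat_exp_eq_0)

lemma deriv_eq_0_if_locally_const:
  fixes g :: "real \<Rightarrow> real"
  assumes "open S" "t \<in> S" "\<And>x. x \<in> S \<Longrightarrow> g x = c"
  shows "deriv g t = 0"
proof -
  have "((\<lambda>x. c) has_real_derivative 0) (at t)" by simp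
  then have "(g has_real_derivative 0) (at t)"
    by (rule has_field_derivative_transform_within_open[where S=S]) (use assms in auto)
  then show ?thesis by (rule DERIV_imp_deriv)
qed

lemma bounded_if_vanishes_outside:
  fixes \<phi> :: "real \<Rightarrow> real"
  assumes "\<And>t. isCont \<phi> t" and "\<And>t. t < a \<or> b < t \<Longrightarrow> \<phi> t = 0"
  shows "\<exists>K. \<forall>t. \<bar>\<phi> t\<bar> \<le> K"
proof -
  have "compact (\<phi> ` {a..b})"
    by (intro compact_continuous_image continuous_at_imp_continuous_on) (use assms in auto)
  then obtain K where K: "\<forall>y\<in>\<phi> ` {a..b}. \<bar>y\<bar> \<le> K"
    using compact_imp_bounded bounded_real by metis
  have "\<bar>\<phi> t\<bar> \<le> max K 0" for t
  proof (cases "t < a \<or> b < t")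
    case False
    then have "t \<in> {a..b}" by auto
    then have "\<bar>\<phi> t\<bar> \<le> K" using K by blast
    then show ?thesis by linarith
  qed (use assms(2) in auto)
  then show ?thesis by blast
qed

locale smooth_transition =
  fixes g :: "real \<Rightarrow> real" and a b :: real
  assumes smooth: "smooth g" and range: "0 \<le> g t \<and> g t \<le> 1"
    and eq_0: "t \<le> a \<Longrightarrow> g t = 0" and eq_1: "t \<ge> b \<Longrightarrow> g t = 1"
begin

lemma deriv_eq_0: "t < a \<or> b < t \<Longrightarrow> deriv g t = 0"
proof (elim disjE)
  show "t < a \<Longrightarrow> deriv g t = 0"
    by (rule deriv_eq_0_if_locally_const[where S="{..<a}" and c=0]) (auto simp: eq_0)
  show "b < t \<Longrightarrow> deriv g t = 0"
    by (rule deriv_eq_0_if_locally_const[where S="{b<..}" and c=1]) (auto simp: eq_1)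
qed

lemma deriv2_eq_0: "t < a \<or> b < t \<Longrightarrow> deriv (deriv g) t = 0"
proof (elim disjE)
  show "t < a \<Longrightarrow> deriv (deriv g) t = 0"
    by (rule deriv_eq_0_if_locally_const[where S="{..<a}" and c=0]) (auto simp: deriv_eq_0)
  show "b < t \<Longrightarrow> deriv (deriv g) t = 0"
    by (rule deriv_eq_0_if_locally_const[where S="{b<..}" and c=0]) (auto simp: deriv_eq_0)
qed

lemma bounded_deriv: "\<exists>K. \<forall>t. \<bar>deriv g t\<bar> \<le> K"
  by (rule bounded_if_vanishes_outside[OF smooth_isCont[OF smooth_deriv[OF smooth]] deriv_eq_0])

lemma bounded_deriv2: "\<exists>K. \<forall>t. \<bar>deriv (deriv g) t\<bar> \<le> K"
  by (rule bounded_if_vanishes_outside[OF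
        smooth_isCont[OF smooth_deriv[OF smooth_deriv[OF smooth]]] deriv2_eq_0])

end

lemma smooth_transition_smooth_step:
  assumes "a < b"
  shows "smooth_transition (\<lambda>t. smooth_step ((t - a) / (b - a))) a b"
proof
  have "smooth (\<lambda>t. 1 * smooth_step (1 / (b - a) * t + - a / (b - a)))"
    by (rule smooth_affine[OF smooth_smooth_step])
  moreover have "1 / (b - a) * t + - a / (b - a) = (t - a) / (b - a)" for t
    by (simp add: diff_divide_distrib)
  ultimately show "smooth (\<lambda>t. smooth_step ((t - a) / (b - a)))" by simp
  show "0 \<le> smooth_step ((t - a) / (b - a)) \<and> smooth_step ((t - a) / (b - a)) \<le> 1" for t
    by (rule smooth_step_range)
  show "smooth_step ((t - a) / (b - a)) = 0" if "t \<le> a" for t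
    using assms that by (intro smooth_step_eq_0) (simp add: divide_nonpos_pos)
  show "smooth_step ((t - a) / (b - a)) = 1" if "b \<le> t" for t
    using assms that by (intro smooth_step_eq_1) (simp add: le_divide_eq_1)
qed

definition ln1p_sq :: "real \<Rightarrow> real" where
  "ln1p_sq t = ln (1 + t\<^sup>2)"

lemma one_plus_sq_pos: "1 + t\<^sup>2 > (0::real)"
  by (simp add: add_pos_nonneg)

lemma has_real_derivative_ln1p_sq: "(ln1p_sq has_real_derivative 2 * t / (1 + t\<^sup>2)) (at t)"
  unfolding ln1p_sq_def using one_plus_sq_pos[of t]
  by (auto intro!: derivative_eq_intros simp: field_simps power2_eq_square)

lemma deriv_ln1p_sq: "deriv ln1p_sq = (\<lambda>t. 2 * t / (1 + t\<^sup>2))"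
  using has_real_derivative_ln1p_sq by (auto intro!: ext DERIV_imp_deriv)

lemma deriv2_ln1p_sq: "deriv (deriv ln1p_sq) t = (2 - 2 * t\<^sup>2) / (1 + t\<^sup>2)\<^sup>2"
  unfolding deriv_ln1p_sq using one_plus_sq_pos[of t]
  by (intro DERIV_imp_deriv) (auto intro!: derivative_eq_intros simp: field_simps power2_eq_square)

lemma smooth_ln1p_sq: "smooth ln1p_sq"
proof (rule smoothI)
  show "ln1p_sq differentiable (at x)" for x
    using has_real_derivative_ln1p_sq by (auto simp: real_differentiable_def)
  have "smooth (\<lambda>t. poly [:0, 2:] t / poly [:1, 0, 1:] t)"
    by (rule smooth_divide[OF smooth_poly smooth_poly]) (simp add: add_pos_nonneg)
  moreover have "(\<lambda>t. poly [:0, 2:] t / poly [:1, 0, 1:] t) = deriv ln1p_sq"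
    unfolding deriv_ln1p_sq by (auto simp: power2_eq_square)
  ultimately show "smooth (deriv ln1p_sq)" by simp
qed

lemma two_abs_le_one_plus_sq: "2 * \<bar>t\<bar> \<le> 1 + t\<^sup>2" for t :: real
  using sum_squares_bound[of "\<bar>t\<bar>" 1] by simp

lemma abs_deriv_ln1p_sq_le: "\<bar>deriv ln1p_sq t\<bar> \<le> 1"
  using two_abs_le_one_plus_sq[of t] one_plus_sq_pos[of t]
  unfolding deriv_ln1p_sq by (simp add: abs_div abs_mult divide_le_eq_1)

lemma abs_deriv2_ln1p_sq_le: "\<bar>deriv (deriv ln1p_sq) t\<bar> \<le> 2"
proof -
  have "\<bar>2 - 2 * t\<^sup>2\<bar> \<le> 2 * (1 + t\<^sup>2)"
    by (simp add: abs_le_iff)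
  also have "\<dots> \<le> 2 * (1 + t\<^sup>2)\<^sup>2"
    using self_le_power[of "1 + t\<^sup>2" 2] by simp
  finally show ?thesis
    unfolding deriv2_ln1p_sq using one_plus_sq_pos[of t] by (simp add: abs_div divide_le_eq)
qed

lemma ln1p_sq_nonneg: "ln1p_sq t \<ge> 0"
  by (simp add: ln1p_sq_def)

lemma ln1p_sq_mono: "\<bar>s\<bar> \<le> \<bar>t\<bar> \<Longrightarrow> ln1p_sq s \<le> ln1p_sq t"
  unfolding ln1p_sq_def by (simp add: abs_le_square_iff add_pos_nonneg)

lemma ln1p_sq_rescale_bounds:
  assumes "q \<ge> 1"
  shows "0 \<le> ln1p_sq t - ln1p_sq (t / q) \<and> ln1p_sq t - ln1p_sq (t / q) \<le> 2 * ln q"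
proof
  have "\<bar>t / q\<bar> \<le> \<bar>t\<bar>"
    using assms by (simp add: abs_div divide_le_eq mult_le_cancel_left1)
  then show "0 \<le> ln1p_sq t - ln1p_sq (t / q)" using ln1p_sq_mono by simp
next
  have q: "q > 0" using assms by simp
  have "q\<^sup>2 * (1 + (t / q)\<^sup>2) = q\<^sup>2 + t\<^sup>2"
    using q by (simp add: field_simps)
  moreover have "1 \<le> q\<^sup>2"
    using assms by (simp add: one_le_power)
  ultimately have "1 + t\<^sup>2 \<le> q\<^sup>2 * (1 + (t / q)\<^sup>2)"
    by simp
  then have "ln (1 + t\<^sup>2) \<le> ln (q\<^sup>2 * (1 + (t / q)\<^sup>2))"
    using one_plus_sq_pos[of t] by simp
  also have "\<dots> = 2 * ln q + ln (1 + (t / q)\<^sup>2)"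
    using q one_plus_sq_pos[of "t / q"] by (simp add: ln_mult ln_realpow)
  finally show "ln1p_sq t - ln1p_sq (t / q) \<le> 2 * ln q" by (simp add: ln1p_sq_def)
qed

lemma abs_less_exp_if_ln1p_sq_less: "ln1p_sq t < M \<Longrightarrow> \<bar>t\<bar> < exp M"
proof -
  assume "ln1p_sq t < M"
  then have "1 + t\<^sup>2 < exp M"
    unfolding ln1p_sq_def by (simp add: add_pos_nonneg ln_less_cancel_iff[symmetric])
  moreover have "\<bar>t\<bar> \<le> 1 + t\<^sup>2" using two_abs_le_one_plus_sq[of t] by simp
  ultimately show ?thesis by linarith
qed

lemma abs_scaled_convex_combination_le:
  fixes a b M c E S Y Q :: real
  assumes "\<bar>a\<bar> \<le> M" "\<bar>b\<bar> \<le> M" "0 \<le> c" "c \<le> 1" "E \<ge> 1" "S > 0" "0 \<le> Y" "Y \<le> Q * S"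
  shows "\<bar>Y * (a / S + (b / (E * S) - a / S) * c)\<bar> \<le> Q * M"
proof -
  have "\<bar>b / E\<bar> \<le> \<bar>b\<bar>"
    using assms(5) by (simp add: abs_div divide_le_eq mult_le_cancel_left1)
  then have "\<bar>a\<bar> * (1 - c) + \<bar>b / E\<bar> * c \<le> M * (1 - c) + M * c"
    using assms(1-4) by (intro add_mono mult_right_mono) auto
  moreover have "\<bar>a * (1 - c) + (b / E) * c\<bar> \<le> \<bar>a\<bar> * (1 - c) + \<bar>b / E\<bar> * c"
    using abs_triangle_ineq[of "a * (1 - c)" "(b / E) * c"] assms(3,4) by (simp add: abs_mult)
  ultimately have combination: "\<bar>a * (1 - c) + (b / E) * c\<bar> \<le> M"
    by (simp add: algebra_simps)
  have ratio: "0 \<le> Y / S" "Y / S \<le> Q"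
    using assms(6-8) by (auto simp: divide_le_eq mult.commute)
  have "Y * (a / S + (b / (E * S) - a / S) * c) = (Y / S) * (a * (1 - c) + (b / E) * c)"
    using assms(5,6) by (simp add: field_simps)
  also have "\<bar>\<dots>\<bar> = (Y / S) * \<bar>a * (1 - c) + (b / E) * c\<bar>"
    by (simp only: abs_mult abs_of_nonneg[OF ratio(1)])
  also have "\<dots> \<le> Q * M"
    using ratio combination by (intro mult_mono) auto
  finally show ?thesis .
qed

lemma abs_scaled_product_le:
  fixes d c E K S Y Q :: real
  assumes "\<bar>d\<bar> \<le> E" "\<bar>c\<bar> \<le> K" "S > 0" "0 \<le> Y" "Y \<le> Q * S"
  shows "\<bar>Y * (d * (c / S))\<bar> \<le> Q * (E * K)"
proof -
  have ratio: "0 \<le> Y / S" "Y / S \<le> Q"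
    using assms(3-5) by (auto simp: divide_le_eq mult.commute)
  have "\<bar>Y * (d * (c / S))\<bar> = (Y / S) * (\<bar>d\<bar> * \<bar>c\<bar>)"
    using ratio assms(3,4) by (simp add: abs_mult)
  also have "\<dots> \<le> Q * (E * K)"
    using ratio assms(1,2) by (intro mult_mono) auto
  finally show ?thesis .
qed

section \<open>Functions of separated variables\<close>

inductive_set smooth_separable_sums :: "(real \<times> real \<Rightarrow> real) set" where
  "smooth a \<Longrightarrow> smooth b \<Longrightarrow> (\<lambda>z. a (fst z) * b (snd z)) \<in> smooth_separable_sums"
| "f \<in> smooth_separable_sums \<Longrightarrow> g \<in> smooth_separable_sums \<Longrightarrow>
     (\<lambda>z. f z + g z) \<in> smooth_separable_sums"

lemma smooth_separable_sums_pd_closed: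
  "f \<in> smooth_separable_sums \<Longrightarrow> continuous_on UNIV f \<and>
     (\<forall>x y. (\<lambda>t. f (t, y)) differentiable (at x) \<and> (\<lambda>t. f (x, t)) differentiable (at y)) \<and>
     pdx f \<in> smooth_separable_sums \<and> pdy f \<in> smooth_separable_sums"
proof (induction rule: smooth_separable_sums.induct)
  case (1 a b)
  have "continuous_on UNIV (\<lambda>z. a (fst z) * b (snd z))"
    by (intro continuous_on_mult continuous_on_compose2[OF smooth_continuous_on[OF 1(1)]]
        continuous_on_compose2[OF smooth_continuous_on[OF 1(2)]] continuous_intros) auto
  moreover have dx: "((\<lambda>t. a t * b y) has_real_derivative deriv a x * b y) (at x)" for x y
    using smooth_has_real_derivative[OF 1(1)] by (auto intro!: derivative_eq_intros)
  moreover have dy: "((\<lambda>t. a x * b t) has_real_derivative a x * deriv b y) (at y)" for x y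
    using smooth_has_real_derivative[OF 1(2)] by (auto intro!: derivative_eq_intros)
  moreover have "pdx (\<lambda>z. a (fst z) * b (snd z)) = (\<lambda>z. deriv a (fst z) * b (snd z))"
    unfolding pdx_def using dx by (auto intro!: ext DERIV_imp_deriv)
  moreover have "pdy (\<lambda>z. a (fst z) * b (snd z)) = (\<lambda>z. a (fst z) * deriv b (snd z))"
    unfolding pdy_def using dy by (auto intro!: ext DERIV_imp_deriv)
  moreover have "\<forall>x y. (\<lambda>t. a t * b y) differentiable (at x) \<and> (\<lambda>t. a x * b t) differentiable (at y)"
    using dx dy unfolding real_differentiable_def by blast
  ultimately show ?case
    using 1 by (auto intro: smooth_separable_sums.intros smooth_deriv)
next
  case (2 f g)
  have dx: "((\<lambda>t. f (t, y) + g (t, y)) has_real_derivative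
      deriv (\<lambda>t. f (t, y)) x + deriv (\<lambda>t. g (t, y)) x) (at x)" for x y
    using 2 DERIV_deriv_iff_real_differentiable by (auto intro!: derivative_eq_intros)
  have dy: "((\<lambda>t. f (x, t) + g (x, t)) has_real_derivative
      deriv (\<lambda>t. f (x, t)) y + deriv (\<lambda>t. g (x, t)) y) (at y)" for x y
    using 2 DERIV_deriv_iff_real_differentiable by (auto intro!: derivative_eq_intros)
  have "pdx (\<lambda>z. f z + g z) = (\<lambda>z. pdx f z + pdx g z)"
    unfolding pdx_def using dx by (auto intro!: ext DERIV_imp_deriv)
  moreover have "pdy (\<lambda>z. f z + g z) = (\<lambda>z. pdy f z + pdy g z)"
    unfolding pdy_def using dy by (auto intro!: ext DERIV_imp_deriv)
  moreover have "\<forall>x y. (\<lambda>t. f (t, y) + g (t, y)) differentiable (at x) \<and>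
      (\<lambda>t. f (x, t) + g (x, t)) differentiable (at y)"
    using dx dy unfolding real_differentiable_def by blast
  ultimately show ?case
    using 2 by (auto intro!: continuous_on_add smooth_separable_sums.intros)
qed

lemma iter_pd_smooth_separable_sums:
  "f \<in> smooth_separable_sums \<Longrightarrow> iter_pd ds f \<in> smooth_separable_sums"
  by (induction ds) (simp_all add: smooth_separable_sums_pd_closed)

lemma strip_smooth_if_smooth_separable_sums:
  assumes f: "f \<in> smooth_separable_sums" and bounded: "\<And>R. bounded (U \<inter> {(x, y). \<bar>x\<bar> \<le> R})"
  shows "strip_smooth U f"
  unfolding strip_smooth_def
proof
  fix ds
  note props = smooth_separable_sums_pd_closed[OF iter_pd_smooth_separable_sums[OF f, of ds]]
  have "bounded (iter_pd ds f ` (U \<inter> {(x, y). \<bar>x\<bar> \<le> R}))" for R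
  proof -
    define B where "B = U \<inter> {(x, y). \<bar>x\<bar> \<le> R}"
    have "compact (closure B)"
      unfolding B_def using bounded[of R] by (rule compact_closure[THEN iffD2])
    then have "compact (iter_pd ds f ` closure B)"
      using props continuous_on_subset[of UNIV "iter_pd ds f" "closure B"]
      by (intro compact_continuous_image) simp_all
    then have "bounded (iter_pd ds f ` closure B)" by (rule compact_imp_bounded)
    moreover have "iter_pd ds f ` B \<subseteq> iter_pd ds f ` closure B"
      using closure_subset by (rule image_mono)
    ultimately show ?thesis unfolding B_def by (rule bounded_subset)
  qed
  then show "continuous_on U (iter_pd ds f) \<and>
      (\<forall>x y. (x, y) \<in> U \<longrightarrow> (\<lambda>t. iter_pd ds f (t, y)) differentiable (at x) \<and>
        (\<lambda>t. iter_pd ds f (x, t)) differentiable (at y)) \<and>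
      (\<forall>R. bounded (iter_pd ds f ` (U \<inter> {(x, y). \<bar>x\<bar> \<le> R})))"
    using props continuous_on_subset[of UNIV "iter_pd ds f" U] by simp
qed

lemma pdx_add_mult_form:
  assumes "smooth A" "smooth D"
  shows "pdx (\<lambda>z. A (fst z) + D (fst z) * X (snd z)) =
      (\<lambda>z. deriv A (fst z) + deriv D (fst z) * X (snd z))"
proof -
  have "((\<lambda>t. A t + D t * X y) has_real_derivative deriv A x + deriv D x * X y) (at x)" for x y
    using smooth_has_real_derivative[OF assms(1)] smooth_has_real_derivative[OF assms(2)]
    by (auto intro!: derivative_eq_intros)
  then show ?thesis unfolding pdx_def by (auto intro!: ext DERIV_imp_deriv)
qed

lemma pdy_add_mult_form:
  assumes "smooth X"
  shows "pdy (\<lambda>z. A (fst z) + D (fst z) * X (snd z)) = (\<lambda>z. D (fst z) * deriv X (snd z))"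
proof -
  have "((\<lambda>t. A x + D x * X t) has_real_derivative D x * deriv X y) (at y)" for x y
    using smooth_has_real_derivative[OF assms] by (auto intro!: derivative_eq_intros)
  then show ?thesis unfolding pdy_def by (auto intro!: ext DERIV_imp_deriv)
qed

section \<open>The treebolic space\<close>

lemma istopology_HT_open:
  "istopology (\<lambda>U. U \<subseteq> HT_set q h \<and>
     (\<forall>v. openin (top_of_set (strip q h v)) {z \<in> strip q h v. HT_proj q h pred (z, v) \<in> U}))"
proof -
  let ?preimage = "\<lambda>U v. {z \<in> strip q h v. HT_proj q h pred (z, v) \<in> U}"
  have "?preimage (S \<inter> T) v = ?preimage S v \<inter> ?preimage T v" for S T v
    by auto
  moreover have "?preimage (\<Union>K) v = \<Union>((\<lambda>U. ?preimage U v) ` K)" for K v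
    by auto
  ultimately show ?thesis
    unfolding istopology_def by (auto intro!: openin_Int openin_Union)
qed

lemma openin_HT_top:
  "openin (HT_top q h pred) U \<longleftrightarrow> U \<subseteq> HT_set q h \<and>
     (\<forall>v. openin (top_of_set (strip q h v)) {z \<in> strip q h v. HT_proj q h pred (z, v) \<in> U})"
  unfolding HT_top_def topology_inverse'[OF istopology_HT_open] by simp

definition tree_dist :: "('v \<Rightarrow> 'v) \<Rightarrow> 'v \<Rightarrow> 'v \<Rightarrow> nat" where
  "tree_dist pred v w = (LEAST k. \<exists>m n. m + n = k \<and> (pred ^^ m) v = (pred ^^ n) w)"

lemma tree_dist_le: "(pred ^^ m) v = (pred ^^ n) w \<Longrightarrow> tree_dist pred v w \<le> m + n"
  unfolding tree_dist_def by (rule Least_le) blast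

lemma finite_funpow_preimage:
  fixes pred :: "'v \<Rightarrow> 'v"
  assumes "\<And>v. finite {u. pred u = v}"
  shows "finite {u. (pred ^^ m) u = w}"
proof (induction m arbitrary: w)
  case (Suc m)
  have "{u. (pred ^^ Suc m) u = w} = (\<Union>v\<in>{v. (pred ^^ m) v = w}. {u. pred u = v})"
    by (auto simp: funpow_Suc_right simp del: funpow.simps)
  then show ?case using Suc assms by simp
qed simp

locale treebolic =
  fixes q :: real and pred :: "'v \<Rightarrow> 'v" and h :: "'v \<Rightarrow> int" and root :: 'v
  assumes q_gt_1: "q > 1"
    and h_pred: "h (pred v) = h v - 1"
    and finite_children: "finite {w. pred w = v}"
    and common_ancestor: "\<exists>m n. (pred ^^ m) v = (pred ^^ n) w"
begin

lemma tree_dist_witness: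
  obtains m n where "m + n = tree_dist pred v w" "(pred ^^ m) v = (pred ^^ n) w"
proof -
  obtain m n where "(pred ^^ m) v = (pred ^^ n) w" using common_ancestor by blast
  then have "\<exists>k m n. m + n = k \<and> (pred ^^ m) v = (pred ^^ n) w" by blast
  from LeastI_ex[OF this] show ?thesis using that unfolding tree_dist_def by blast
qed

lemma tree_dist_pred_le: "tree_dist pred (pred v) w \<le> tree_dist pred v w + 1"
proof -
  obtain m n where mn: "m + n = tree_dist pred v w" "(pred ^^ m) v = (pred ^^ n) w"
    by (rule tree_dist_witness)
  show ?thesis
  proof (cases m)
    case 0
    then have "(pred ^^ 0) (pred v) = (pred ^^ Suc n) w" using mn by simp
    then show ?thesis using mn 0 by (fastforce dest: tree_dist_le)
  next
    case (Suc k)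
    then have "(pred ^^ k) (pred v) = (pred ^^ n) w"
      using mn by (simp add: funpow_Suc_right del: funpow.simps)
    then show ?thesis using mn Suc by (fastforce dest: tree_dist_le)
  qed
qed

lemma tree_dist_le_pred: "tree_dist pred v w \<le> tree_dist pred (pred v) w + 1"
proof -
  obtain m n where mn: "m + n = tree_dist pred (pred v) w" "(pred ^^ m) (pred v) = (pred ^^ n) w"
    by (rule tree_dist_witness)
  then have "(pred ^^ Suc m) v = (pred ^^ n) w" by (simp add: funpow_Suc_right del: funpow.simps)
  then show ?thesis using mn by (fastforce dest: tree_dist_le)
qed

lemma finite_tree_dist_less: "finite {v. tree_dist pred v w < N}"
proof (rule finite_subset)
  show "{v. tree_dist pred v w < N} \<subseteq> (\<Union>m<N. \<Union>n<N. {v. (pred ^^ m) v = (pred ^^ n) w})"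
  proof
    fix v assume "v \<in> {v. tree_dist pred v w < N}"
    moreover obtain m n where "m + n = tree_dist pred v w" "(pred ^^ m) v = (pred ^^ n) w"
      by (rule tree_dist_witness)
    ultimately show "v \<in> (\<Union>m<N. \<Union>n<N. {v. (pred ^^ m) v = (pred ^^ n) w})"
      by (simp add: bexI[where x=m] bexI[where x=n])
  qed
qed (auto intro: finite_funpow_preimage finite_children)

definition weight :: "'v \<Rightarrow> real" where
  "weight v = 1 + real (tree_dist pred v root)"

lemma weight_ge_1: "weight v \<ge> 1"
  by (simp add: weight_def)

lemma abs_weight_diff_pred_le: "\<bar>weight v - weight (pred v)\<bar> \<le> 1"
  using tree_dist_pred_le[of v root] tree_dist_le_pred[of v root] by (simp add: weight_def)

definition strip_bottom :: "'v \<Rightarrow> real" where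
  "strip_bottom v = q powr (real_of_int (h v) - 1)"

lemma strip_bottom_pos: "strip_bottom v > 0"
  using q_gt_1 by (simp add: strip_bottom_def)

lemma strip_top_eq: "q powr real_of_int (h v) = q * strip_bottom v"
  using q_gt_1 by (simp add: strip_bottom_def powr_diff)

lemma strip_bottom_pred: "q * strip_bottom (pred v) = strip_bottom v"
  using q_gt_1 by (simp add: strip_bottom_def h_pred powr_diff power2_eq_square field_simps)

lemma strip_bottom_pred_less: "strip_bottom (pred v) < strip_bottom v"
proof -
  have "1 * strip_bottom (pred v) < q * strip_bottom (pred v)"
    using q_gt_1 strip_bottom_pos[of "pred v"] by (intro mult_strict_right_mono) auto
  then show ?thesis using strip_bottom_pred[of v] by simp
qed

lemma mem_strip_iff: "(x, y) \<in> strip q h v \<longleftrightarrow> strip_bottom v \<le> y \<and> y \<le> q * strip_bottom v"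
  unfolding strip_def strip_top_eq strip_bottom_def[symmetric] by simp

lemma mem_strip_open_iff: "(x, y) \<in> strip_open q h v \<longleftrightarrow> strip_bottom v < y \<and> y < q * strip_bottom v"
  unfolding strip_open_def strip_top_eq strip_bottom_def[symmetric] by simp

lemma mem_HT_set_iff: "((x, y), v) \<in> HT_set q h \<longleftrightarrow> strip_bottom v < y \<and> y \<le> q * strip_bottom v"
  unfolding HT_set_def strip_top_eq strip_bottom_def[symmetric] by simp

lemma HT_proj_eq:
  "HT_proj q h pred ((x, y), v) = (if y = strip_bottom v then ((x, y), pred v) else ((x, y), v))"
  by (simp add: HT_proj_def strip_bottom_def)

lemma HT_proj_in_HT_set: "z \<in> strip q h v \<Longrightarrow> HT_proj q h pred (z, v) \<in> HT_set q h"
  using strip_bottom_pred_less[of v] strip_bottom_pred[of v]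
  by (cases z) (auto simp: HT_proj_eq mem_HT_set_iff mem_strip_iff)

lemma topspace_HT_top: "topspace (HT_top q h pred) = HT_set q h"
proof -
  have "{z \<in> strip q h v. HT_proj q h pred (z, v) \<in> HT_set q h} = topspace (top_of_set (strip q h v))"
    for v using HT_proj_in_HT_set by auto
  then have "openin (HT_top q h pred) (HT_set q h)"
    by (simp add: openin_HT_top)
  then have "HT_set q h \<subseteq> topspace (HT_top q h pred)"
    by (rule openin_subset)
  moreover have "topspace (HT_top q h pred) \<subseteq> HT_set q h"
    using openin_topspace[of "HT_top q h pred"] unfolding openin_HT_top by (rule conjunct1)
  ultimately show ?thesis by (rule subset_antisym[rotated])
qed

lemma continuous_map_HT_proj:
  "continuous_map (top_of_set (strip q h v)) (HT_top q h pred) (\<lambda>z. HT_proj q h pred (z, v))"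
  using HT_proj_in_HT_set by (auto simp: continuous_map_def topspace_HT_top openin_HT_top)

lemma continuous_map_HT_topI:
  assumes "\<And>v. continuous_on (strip q h v) (\<lambda>z. f (HT_proj q h pred (z, v)))"
  shows "continuous_map (HT_top q h pred) euclideanreal f"
  unfolding continuous_map_def topspace_HT_top
proof (intro conjI allI impI)
  fix U :: "real set" assume "openin euclideanreal U"
  then have "openin (top_of_set (strip q h v)) (strip q h v \<inter> (\<lambda>z. f (HT_proj q h pred (z, v))) -` U)"
    for v using assms continuous_openin_preimage_gen by (metis open_openin)
  moreover have "{z \<in> strip q h v. HT_proj q h pred (z, v) \<in> {P \<in> HT_set q h. f P \<in> U}} =
      strip q h v \<inter> (\<lambda>z. f (HT_proj q h pred (z, v))) -` U" for v
    using HT_proj_in_HT_set by auto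
  ultimately show "openin (HT_top q h pred) {P \<in> HT_set q h. f P \<in> U}"
    by (simp add: openin_HT_top)
qed simp

section \<open>The exhaustion function\<close>

definition blend_start :: real where
  "blend_start = (2 + q) / 3"

definition blend_end :: real where
  "blend_end = (1 + 2 * q) / 3"

lemma blend_interval: "1 < blend_start" "blend_start < blend_end" "blend_end < q"
  using q_gt_1 by (simp_all add: blend_start_def blend_end_def)

definition chi :: "real \<Rightarrow> real" where
  "chi t = smooth_step ((t - blend_start) / (blend_end - blend_start))"

lemma chi_transition: "smooth_transition chi blend_start blend_end"
  unfolding chi_def[abs_def] using blend_interval(2) by (rule smooth_transition_smooth_step)

lemma chi_smooth: "smooth chi"
  using chi_transition by (rule smooth_transition.smooth)

lemma chi_range: "0 \<le> chi t \<and> chi t \<le> 1"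
  using chi_transition by (rule smooth_transition.range)

lemma chi_1: "chi 1 = 0"
  using smooth_transition.eq_0[OF chi_transition] blend_interval by simp

lemma chi_q: "chi q = 1"
  using smooth_transition.eq_1[OF chi_transition] blend_interval by simp

definition lower_profile :: "'v \<Rightarrow> real \<Rightarrow> real" where
  "lower_profile v x = weight (pred v) + ln1p_sq (x / strip_bottom v)"

definition profile_gap :: "'v \<Rightarrow> real \<Rightarrow> real" where
  "profile_gap v x = weight v - weight (pred v)
     + ln1p_sq (x / (q * strip_bottom v)) - ln1p_sq (x / strip_bottom v)"

definition blend :: "'v \<Rightarrow> real \<Rightarrow> real" where
  "blend v y = chi (y / strip_bottom v)"

definition rho :: "(real \<times> real) \<times> 'v \<Rightarrow> real" where
  "rho P = lower_profile (snd P) (fst (fst P))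
     + profile_gap (snd P) (fst (fst P)) * blend (snd P) (snd (fst P))"

lemma rho_on_strip:
  "(\<lambda>z. rho (z, v)) = (\<lambda>z. lower_profile v (fst z) + profile_gap v (fst z) * blend v (snd z))"
  by (simp add: rho_def)

lemma smooth_lower_profile: "smooth (lower_profile v)"
  unfolding lower_profile_def[abs_def] by (intro smooth_add smooth_const smooth_scaled smooth_ln1p_sq)

lemma smooth_profile_gap: "smooth (profile_gap v)"
  unfolding profile_gap_def[abs_def]
  by (intro smooth_add smooth_diff smooth_const smooth_scaled smooth_ln1p_sq)

lemma smooth_blend: "smooth (blend v)"
  unfolding blend_def[abs_def] by (intro smooth_scaled chi_smooth)

lemma rho_on_strip_separable: "(\<lambda>z. rho (z, v)) \<in> smooth_separable_sums"
  using smooth_separable_sums.intros(2)[OF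
      smooth_separable_sums.intros(1)[OF smooth_lower_profile smooth_const[of 1]]
      smooth_separable_sums.intros(1)[OF smooth_profile_gap smooth_blend]]
  by (simp add: rho_on_strip)

lemma deriv_lower_profile:
  "deriv (lower_profile v) = (\<lambda>x. deriv ln1p_sq (x / strip_bottom v) / strip_bottom v)"
  by (rule ext) (simp add: lower_profile_def[abs_def] deriv_scaled smooth_field_differentiable
      smooth_scaled smooth_const smooth_ln1p_sq)

lemma deriv2_lower_profile:
  "deriv (deriv (lower_profile v)) =
     (\<lambda>x. deriv (deriv ln1p_sq) (x / strip_bottom v) / strip_bottom v / strip_bottom v)"
  by (rule ext) (simp add: deriv_lower_profile deriv_cdivide_right deriv_scaled
      smooth_field_differentiable smooth_scaled smooth_deriv smooth_ln1p_sq)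

lemma deriv_profile_gap:
  "deriv (profile_gap v) = (\<lambda>x. deriv ln1p_sq (x / (q * strip_bottom v)) / (q * strip_bottom v)
     - deriv ln1p_sq (x / strip_bottom v) / strip_bottom v)"
  by (rule ext) (simp add: profile_gap_def[abs_def] deriv_scaled smooth_field_differentiable
      smooth_add smooth_scaled smooth_const smooth_ln1p_sq)

lemma deriv2_profile_gap:
  "deriv (deriv (profile_gap v)) =
     (\<lambda>x. deriv (deriv ln1p_sq) (x / (q * strip_bottom v)) / (q * strip_bottom v) / (q * strip_bottom v)
       - deriv (deriv ln1p_sq) (x / strip_bottom v) / strip_bottom v / strip_bottom v)"
  unfolding deriv_profile_gap
  by (intro ext DERIV_imp_deriv DERIV_diff DERIV_cdivide has_real_derivative_scaled
      smooth_deriv smooth_ln1p_sq)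

lemma deriv_blend: "deriv (blend v) = (\<lambda>y. deriv chi (y / strip_bottom v) / strip_bottom v)"
  by (rule ext) (simp add: blend_def[abs_def] deriv_scaled chi_smooth)

lemma deriv2_blend:
  "deriv (deriv (blend v)) = (\<lambda>y. deriv (deriv chi) (y / strip_bottom v) / strip_bottom v / strip_bottom v)"
  by (rule ext) (simp add: deriv_blend deriv_cdivide_right deriv_scaled
      smooth_field_differentiable smooth_scaled smooth_deriv chi_smooth)

lemma pdx_rho:
  "pdx (\<lambda>z. rho (z, v)) (x, y) = deriv (lower_profile v) x + deriv (profile_gap v) x * blend v y"
  unfolding rho_on_strip pdx_add_mult_form[OF smooth_lower_profile smooth_profile_gap] by simp

lemma pdxx_rho:
  "pdx (pdx (\<lambda>z. rho (z, v))) (x, y) =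
     deriv (deriv (lower_profile v)) x + deriv (deriv (profile_gap v)) x * blend v y"
  unfolding rho_on_strip pdx_add_mult_form[OF smooth_lower_profile smooth_profile_gap]
    pdx_add_mult_form[OF smooth_deriv[OF smooth_lower_profile] smooth_deriv[OF smooth_profile_gap]]
  by simp

lemma pdy_rho: "pdy (\<lambda>z. rho (z, v)) (x, y) = profile_gap v x * deriv (blend v) y"
  unfolding rho_on_strip pdy_add_mult_form[OF smooth_blend] by simp

lemma pdyy_rho: "pdy (pdy (\<lambda>z. rho (z, v))) (x, y) = profile_gap v x * deriv (deriv (blend v)) y"
  using pdy_add_mult_form[OF smooth_deriv[OF smooth_blend], of "\<lambda>_. 0" "profile_gap v"]
  unfolding rho_on_strip pdy_add_mult_form[OF smooth_blend] by simp

lemma abs_profile_gap_le: "\<bar>profile_gap v x\<bar> \<le> 1 + 2 * ln q"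
  using ln1p_sq_rescale_bounds[of q "x / strip_bottom v"] q_gt_1 abs_weight_diff_pred_le[of v]
  unfolding profile_gap_def by (simp add: mult.commute) linarith

lemma strip_open_height:
  assumes "(x, y) \<in> strip_open q h v"
  shows "0 < y" "y \<le> q * strip_bottom v" "y\<^sup>2 \<le> (q * q) * (strip_bottom v * strip_bottom v)"
proof -
  show "0 < y" "y \<le> q * strip_bottom v"
    using assms strip_bottom_pos[of v] by (auto simp: mem_strip_open_iff)
  then have "y\<^sup>2 \<le> (q * strip_bottom v)\<^sup>2" by (intro power_mono) auto
  then show "y\<^sup>2 \<le> (q * q) * (strip_bottom v * strip_bottom v)"
    by (simp add: power2_eq_square mult_ac)
qed

lemma abs_y_pdx_rho_le:
  assumes "(x, y) \<in> strip_open q h v"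
  shows "\<bar>y * pdx (\<lambda>z. rho (z, v)) (x, y)\<bar> \<le> q * 1"
  unfolding pdx_rho deriv_lower_profile deriv_profile_gap blend_def
  using strip_open_height[OF assms] chi_range q_gt_1 strip_bottom_pos[of v]
  by (intro abs_scaled_convex_combination_le abs_deriv_ln1p_sq_le) auto

lemma abs_y2_pdxx_rho_le:
  assumes "(x, y) \<in> strip_open q h v"
  shows "\<bar>y\<^sup>2 * pdx (pdx (\<lambda>z. rho (z, v))) (x, y)\<bar> \<le> (q * q) * 2"
proof -
  let ?s = "strip_bottom v"
  have "1 * 1 \<le> q * q" using q_gt_1 by (intro mult_mono) auto
  then have "\<bar>y\<^sup>2 * (deriv (deriv ln1p_sq) (x / ?s) / (?s * ?s) + (deriv (deriv ln1p_sq) (x / (q * ?s))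
      / ((q * q) * (?s * ?s)) - deriv (deriv ln1p_sq) (x / ?s) / (?s * ?s)) * chi (y / ?s))\<bar> \<le> (q * q) * 2"
    using strip_open_height[OF assms] chi_range strip_bottom_pos[of v]
    by (intro abs_scaled_convex_combination_le abs_deriv2_ln1p_sq_le) auto
  then show ?thesis
    unfolding pdxx_rho deriv2_lower_profile deriv2_profile_gap blend_def by (simp add: mult_ac)
qed

lemma abs_y_pdy_rho_le:
  assumes "(x, y) \<in> strip_open q h v" and "\<forall>t. \<bar>deriv chi t\<bar> \<le> K"
  shows "\<bar>y * pdy (\<lambda>z. rho (z, v)) (x, y)\<bar> \<le> q * ((1 + 2 * ln q) * K)"
  unfolding pdy_rho deriv_blend
  using strip_open_height[OF assms(1)] strip_bottom_pos[of v] assms(2)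
  by (intro abs_scaled_product_le abs_profile_gap_le) auto

lemma abs_y2_pdyy_rho_le:
  assumes "(x, y) \<in> strip_open q h v" and "\<forall>t. \<bar>deriv (deriv chi) t\<bar> \<le> K"
  shows "\<bar>y\<^sup>2 * pdy (pdy (\<lambda>z. rho (z, v))) (x, y)\<bar> \<le> (q * q) * ((1 + 2 * ln q) * K)"
proof -
  have "\<bar>y\<^sup>2 * (profile_gap v x * (deriv (deriv chi) (y / strip_bottom v) /
      (strip_bottom v * strip_bottom v)))\<bar> \<le> (q * q) * ((1 + 2 * ln q) * K)"
    using strip_open_height[OF assms(1)] strip_bottom_pos[of v] assms(2)
    by (intro abs_scaled_product_le abs_profile_gap_le) auto
  then show ?thesis unfolding pdyy_rho deriv2_blend by simp
qed

lemma rho_HT_proj: "rho (HT_proj q h pred (z, v)) = rho (z, v)"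
proof (cases z)
  case (Pair x y)
  have "strip_bottom v / strip_bottom (pred v) = q"
    using strip_bottom_pred[of v] strip_bottom_pos[of "pred v"] by (auto simp: field_simps)
  moreover have "strip_bottom v \<noteq> 0"
    using strip_bottom_pos[of v] by simp
  ultimately show ?thesis
    using Pair strip_bottom_pred[of v]
    by (simp add: HT_proj_eq rho_def lower_profile_def profile_gap_def blend_def chi_1 chi_q)
qed

lemma rho_continuous: "continuous_map (HT_top q h pred) euclideanreal rho"
proof (rule continuous_map_HT_topI)
  fix v
  have "continuous_on (strip q h v) (\<lambda>z. rho (z, v))"
    using smooth_separable_sums_pd_closed[OF rho_on_strip_separable] continuous_on_subset by blast
  then show "continuous_on (strip q h v) (\<lambda>z. rho (HT_proj q h pred (z, v)))"
    by (simp add: rho_HT_proj)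
qed

lemma rho_ge_min_weight:
  assumes "strip_bottom v \<le> y" "y \<le> q * strip_bottom v"
  shows "rho ((x, y), v) \<ge> min (weight (pred v)) (weight v) + ln1p_sq (x / (q * strip_bottom v))"
proof -
  define c where "c = blend v y"
  define m where "m = min (weight (pred v)) (weight v) + ln1p_sq (x / (q * strip_bottom v))"
  have "\<bar>x / (q * strip_bottom v)\<bar> \<le> \<bar>x / strip_bottom v\<bar>"
    using strip_bottom_pos[of v] q_gt_1
    by (simp add: abs_div divide_left_mono mult_le_cancel_left1)
  then have "ln1p_sq (x / (q * strip_bottom v)) \<le> ln1p_sq (x / strip_bottom v)"
    by (rule ln1p_sq_mono)
  then have "m \<le> lower_profile v x"
    by (simp add: m_def lower_profile_def)
  moreover have "m \<le> lower_profile v x + profile_gap v x"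
    by (simp add: m_def lower_profile_def profile_gap_def)
  moreover have "0 \<le> c" "c \<le> 1"
    using chi_range by (auto simp: c_def blend_def)
  ultimately have "(1 - c) * m + c * m \<le> (1 - c) * lower_profile v x + c * (lower_profile v x + profile_gap v x)"
    by (intro add_mono mult_left_mono) auto
  then show ?thesis
    by (simp add: rho_def c_def m_def algebra_simps)
qed

lemma rho_pos:
  assumes "P \<in> HT_set q h"
  shows "rho P > 0"
proof -
  obtain x y v where P: "P = ((x, y), v)" by (metis prod.collapse)
  have "min (weight (pred v)) (weight v) + ln1p_sq (x / (q * strip_bottom v)) \<le> rho P"
    using assms unfolding P by (intro rho_ge_min_weight) (auto simp: mem_HT_set_iff)
  moreover have "min (weight (pred v)) (weight v) \<ge> 1"
    using weight_ge_1 by simp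
  ultimately show ?thesis
    using ln1p_sq_nonneg[of "x / (q * strip_bottom v)"] by linarith
qed

lemma rho_strip_smooth: "strip_smooth (strip_open q h v) (\<lambda>z. rho (z, v))"
proof (rule strip_smooth_if_smooth_separable_sums[OF rho_on_strip_separable])
  fix R
  have "strip_open q h v \<inter> {(x, y). \<bar>x\<bar> \<le> R} \<subseteq> {-R..R} \<times> {strip_bottom v..q * strip_bottom v}"
    by (auto simp: mem_strip_open_iff)
  then show "bounded (strip_open q h v \<inter> {(x, y). \<bar>x\<bar> \<le> R})"
    by (rule bounded_subset[rotated]) (intro bounded_Times bounded_closed_interval)
qed

lemma pdy_rho_eq_0:
  assumes "y < strip_bottom v * blend_start \<or> strip_bottom v * blend_end < y"
  shows "pdy (\<lambda>z. rho (z, v)) (x, y) = 0"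
proof -
  have "y / strip_bottom v < blend_start \<or> blend_end < y / strip_bottom v"
    using assms strip_bottom_pos[of v] by (auto simp: field_simps)
  then show ?thesis
    unfolding pdy_rho deriv_blend by (simp add: smooth_transition.deriv_eq_0[OF chi_transition])
qed

lemma compactin_HT_proj_rectangle:
  "compactin (HT_top q h pred)
     ((\<lambda>z. HT_proj q h pred (z, v)) ` ({-R..R} \<times> {strip_bottom v..q * strip_bottom v}))"
proof (rule image_compactin[OF _ continuous_map_HT_proj])
  show "compactin (top_of_set (strip q h v)) ({-R..R} \<times> {strip_bottom v..q * strip_bottom v})"
    unfolding compactin_subtopology compactin_euclidean_iff by (auto simp: compact_Times mem_strip_iff)
qed

lemma rho_ge_if_weights_ge:
  assumes "((x, y), v) \<in> HT_set q h" "M \<le> weight (pred v)" "M \<le> weight v"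
  shows "M \<le> rho ((x, y), v)"
  using rho_ge_min_weight[of v y x] assms ln1p_sq_nonneg[of "x / (q * strip_bottom v)"]
  by (simp add: mem_HT_set_iff)

lemma rho_ge_if_abs_large:
  assumes "((x, y), v) \<in> HT_set q h" "exp M * (q * strip_bottom v) < \<bar>x\<bar>"
  shows "M \<le> rho ((x, y), v)"
proof -
  have "exp M \<le> \<bar>x / (q * strip_bottom v)\<bar>"
    using assms(2) q_gt_1 strip_bottom_pos[of v] by (simp add: abs_div pos_le_divide_eq)
  then have "M \<le> ln1p_sq (x / (q * strip_bottom v))"
    using abs_less_exp_if_ln1p_sq_less[of "x / (q * strip_bottom v)" M] by linarith
  moreover have "min (weight (pred v)) (weight v) + ln1p_sq (x / (q * strip_bottom v)) \<le> rho ((x, y), v)"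
    using assms(1) by (intro rho_ge_min_weight) (auto simp: mem_HT_set_iff)
  moreover have "min (weight (pred v)) (weight v) \<ge> 1"
    using weight_ge_1 by simp
  ultimately show ?thesis by linarith
qed

lemma rho_exhaustion: "\<exists>K. compactin (HT_top q h pred) K \<and> (\<forall>P \<in> HT_set q h. P \<notin> K \<longrightarrow> M \<le> rho P)"
proof -
  define N where "N = nat \<lceil>M\<rceil> + 1"
  define rectangle where "rectangle v = (\<lambda>z. HT_proj q h pred (z, v)) `
      ({- (exp M * (q * strip_bottom v))..exp M * (q * strip_bottom v)} \<times> {strip_bottom v..q * strip_bottom v})"
    for v
  define K where "K = (\<Union>v\<in>{v. tree_dist pred v root < N}. rectangle v)"
  have "compactin (HT_top q h pred) K"
    unfolding K_def rectangle_def
    by (intro compactin_Union) (auto simp: finite_tree_dist_less compactin_HT_proj_rectangle)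
  moreover have "M \<le> rho ((x, y), v)" if P: "((x, y), v) \<in> HT_set q h" "((x, y), v) \<notin> K" for x y v
  proof (cases "tree_dist pred v root < N")
    case True
    have "((x, y), v) = HT_proj q h pred ((x, y), v)"
      using P(1) by (simp add: HT_proj_eq mem_HT_set_iff)
    then have "(x, y) \<notin> {- (exp M * (q * strip_bottom v))..exp M * (q * strip_bottom v)} \<times>
        {strip_bottom v..q * strip_bottom v}"
      using P(2) True unfolding K_def rectangle_def by blast
    then show ?thesis
      using P(1) by (intro rho_ge_if_abs_large) (auto simp: mem_HT_set_iff)
  next
    case False
    then have "M \<le> weight (pred v)" "M \<le> weight v"
      using tree_dist_le_pred[of v root] by (auto simp: weight_def N_def) linarith+
    then show ?thesis by (rule rho_ge_if_weights_ge[OF P(1)])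
  qed
  ultimately show ?thesis by auto
qed

lemma rho_gradient_bounded:
  "\<exists>B. \<forall>v x y. (x, y) \<in> strip_open q h v \<longrightarrow>
     y * sqrt ((pdx (\<lambda>z. rho (z, v)) (x, y))\<^sup>2 + (pdy (\<lambda>z. rho (z, v)) (x, y))\<^sup>2) \<le> B"
proof -
  obtain K where K: "\<forall>t. \<bar>deriv chi t\<bar> \<le> K"
    using smooth_transition.bounded_deriv[OF chi_transition] by blast
  have "y * sqrt ((pdx (\<lambda>z. rho (z, v)) (x, y))\<^sup>2 + (pdy (\<lambda>z. rho (z, v)) (x, y))\<^sup>2)
      \<le> q * 1 + q * ((1 + 2 * ln q) * K)" if xy: "(x, y) \<in> strip_open q h v" for v x y
  proof -
    have "y * sqrt ((pdx (\<lambda>z. rho (z, v)) (x, y))\<^sup>2 + (pdy (\<lambda>z. rho (z, v)) (x, y))\<^sup>2)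
        \<le> y * (\<bar>pdx (\<lambda>z. rho (z, v)) (x, y)\<bar> + \<bar>pdy (\<lambda>z. rho (z, v)) (x, y)\<bar>)"
      using strip_open_height(1)[OF xy] by (intro mult_left_mono sqrt_sum_squares_le_sum_abs) auto
    also have "\<dots> = \<bar>y * pdx (\<lambda>z. rho (z, v)) (x, y)\<bar> + \<bar>y * pdy (\<lambda>z. rho (z, v)) (x, y)\<bar>"
      using strip_open_height(1)[OF xy] by (simp add: abs_mult distrib_left)
    also have "\<dots> \<le> q * 1 + q * ((1 + 2 * ln q) * K)"
      using abs_y_pdx_rho_le[OF xy] abs_y_pdy_rho_le[OF xy K] by (rule add_mono)
    finally show ?thesis .
  qed
  then show ?thesis by blast
qed

lemma rho_generator_bounded:
  "\<exists>B. \<forall>v x y. (x, y) \<in> strip_open q h v \<longrightarrow>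
     \<bar>y\<^sup>2 * (pdx (pdx (\<lambda>z. rho (z, v))) (x, y) + pdy (pdy (\<lambda>z. rho (z, v))) (x, y))
       + \<alpha> * y * pdy (\<lambda>z. rho (z, v)) (x, y)\<bar> \<le> B"
proof -
  obtain K1 where K1: "\<forall>t. \<bar>deriv chi t\<bar> \<le> K1"
    using smooth_transition.bounded_deriv[OF chi_transition] by blast
  obtain K2 where K2: "\<forall>t. \<bar>deriv (deriv chi) t\<bar> \<le> K2"
    using smooth_transition.bounded_deriv2[OF chi_transition] by blast
  have "\<bar>y\<^sup>2 * (pdx (pdx (\<lambda>z. rho (z, v))) (x, y) + pdy (pdy (\<lambda>z. rho (z, v))) (x, y))
       + \<alpha> * y * pdy (\<lambda>z. rho (z, v)) (x, y)\<bar>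
     \<le> (q * q) * 2 + (q * q) * ((1 + 2 * ln q) * K2) + \<bar>\<alpha>\<bar> * (q * ((1 + 2 * ln q) * K1))"
    if xy: "(x, y) \<in> strip_open q h v" for v x y
  proof -
    let ?xx = "y\<^sup>2 * pdx (pdx (\<lambda>z. rho (z, v))) (x, y)"
      and ?yy = "y\<^sup>2 * pdy (pdy (\<lambda>z. rho (z, v))) (x, y)"
      and ?y = "y * pdy (\<lambda>z. rho (z, v)) (x, y)"
    have "\<bar>y\<^sup>2 * (pdx (pdx (\<lambda>z. rho (z, v))) (x, y) + pdy (pdy (\<lambda>z. rho (z, v))) (x, y))
        + \<alpha> * y * pdy (\<lambda>z. rho (z, v)) (x, y)\<bar> = \<bar>?xx + ?yy + \<alpha> * ?y\<bar>"
      by (simp add: algebra_simps)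
    also have "\<dots> \<le> \<bar>?xx\<bar> + \<bar>?yy\<bar> + \<bar>\<alpha>\<bar> * \<bar>?y\<bar>"
      by (simp add: abs_mult abs_triangle_ineq order_trans[OF abs_triangle_ineq add_mono])
    also have "\<dots> \<le> (q * q) * 2 + (q * q) * ((1 + 2 * ln q) * K2) + \<bar>\<alpha>\<bar> * (q * ((1 + 2 * ln q) * K1))"
      using abs_y2_pdxx_rho_le[OF xy] abs_y2_pdyy_rho_le[OF xy K2] abs_y_pdy_rho_le[OF xy K1]
      by (intro add_mono mult_left_mono) auto
    finally show ?thesis .
  qed
  then show ?thesis by blast
qed

lemma rho_pdy_support:
  "\<exists>a b. q powr (real_of_int (h v) - 1) < a \<and> a \<le> b \<and> b < q powr (real_of_int (h v)) \<and>
     (\<forall>y. q powr (real_of_int (h v) - 1) < y \<and> y < q powr (real_of_int (h v)) \<and> (y < a \<or> b < y)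
        \<longrightarrow> pdy (\<lambda>z. rho (z, v)) (x, y) = 0)"
proof (intro exI conjI allI impI)
  show "q powr (real_of_int (h v) - 1) < strip_bottom v * blend_start"
    "strip_bottom v * blend_start \<le> strip_bottom v * blend_end"
    "strip_bottom v * blend_end < q powr real_of_int (h v)"
    using strip_bottom_pos[of v] blend_interval
    by (simp_all add: strip_bottom_def[symmetric] strip_top_eq)
qed (auto intro: pdy_rho_eq_0)

end

theorem proposition8p3:
  fixes p :: nat and q \<alpha> :: real and pred :: "'v \<Rightarrow> 'v" and h :: "'v \<Rightarrow> int"
  assumes "p \<ge> 1" and "q > 1" and "homtree p pred h"
  shows "\<exists>\<rho> :: (real \<times> real) \<times> 'v \<Rightarrow> real.
    continuous_map (HT_top q h pred) euclideanreal \<rho> \<and>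
    (\<forall>P \<in> HT_set q h. \<rho> P > 0) \<and>
    (\<forall>v. strip_smooth (strip_open q h v) (\<lambda>z. \<rho> (z, v))) \<and>
    (\<forall>v x. \<exists>a b. q powr (real_of_int (h v) - 1) < a \<and> a \<le> b \<and> b < q powr (real_of_int (h v)) \<and>
        (\<forall>y. q powr (real_of_int (h v) - 1) < y \<and> y < q powr (real_of_int (h v)) \<and> (y < a \<or> b < y)
             \<longrightarrow> pdy (\<lambda>z. \<rho> (z, v)) (x, y) = 0)) \<and>
    (\<forall>M. \<exists>K. compactin (HT_top q h pred) K \<and> (\<forall>P \<in> HT_set q h. P \<notin> K \<longrightarrow> \<rho> P \<ge> M)) \<and>
    (\<exists>B. \<forall>v x y. (x, y) \<in> strip_open q h v \<longrightarrow>
        y * sqrt ((pdx (\<lambda>z. \<rho> (z, v)) (x, y))\<^sup>2 + (pdy (\<lambda>z. \<rho> (z, v)) (x, y))\<^sup>2) \<le> B) \<and>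
    (\<exists>B. \<forall>v x y. (x, y) \<in> strip_open q h v \<longrightarrow>
        \<bar>y\<^sup>2 * (pdx (pdx (\<lambda>z. \<rho> (z, v))) (x, y) + pdy (pdy (\<lambda>z. \<rho> (z, v))) (x, y))
          + \<alpha> * y * pdy (\<lambda>z. \<rho> (z, v)) (x, y)\<bar> \<le> B)"
proof -
  interpret treebolic q pred h undefined
    using assms(2,3) by unfold_locales (auto simp: homtree_def)
  show ?thesis
    using rho_pos
    by (intro exI[of _ rho] conjI allI ballI rho_continuous rho_strip_smooth rho_pdy_support
        rho_exhaustion rho_gradient_bounded rho_generator_bounded) auto
qed

end
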